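(* Let $A,B$ be abelian groups, $i,j\geq 1$, and let $\phi:\mathcal{D}_i(A)\rightarrow\mathcal{D}_j(B)$ be a morphism. If $i>j$ then $\phi$ is constant. If $1\leq i\leq j$ then $\phi$ is also a morphism from $\mathcal{D}_1(A)$ to $\mathcal{D}_{j-i+1}(B)$.
   Context: A cube morphism $\{0,1\}^n\rightarrow\{0,1\}^m$ is a map that extends to an affine homomorphism $\mathbb{Z}^n\rightarrow\mathbb{Z}^m$. For an abelian group $A$ and $k\in\mathbb{N}$, $\mathcal{D}_k(A)$ is the set $A$ with cube sets $C^n(\mathcal{D}_k(A))$ consisting of those $f:\{0,1\}^n\rightarrow A$ such that for every cube morphism $\psi:\{0,1\}^{k+1}\rightarrow\{0,1\}^n$ we have $\sum_{v\in\{0,1\}^{k+1}}(-1)^{v_1+\dots+v_{k+1}}f(\psi(v))=0$. A morphism between such structures is a map $g$ with $g\circ c\in C^n$ of the target for every $n$ and every $c\in C^n$ of the source. *)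

theory Defs
  imports Main
begin

text \<open>Vertices of the discrete cube {0,1}^n, encoded as functions nat => nat
  that take values in {0,1} on coordinates below n and vanish elsewhere.\<close>
definition cube :: "nat \<Rightarrow> (nat \<Rightarrow> nat) set" where
  "cube n = {v. (\<forall>i<n. v i \<in> {0, 1}) \<and> (\<forall>i\<ge>n. v i = 0)}"

text \<open>A cube morphism {0,1}^m -> {0,1}^n: a map of cubes that is the restriction
  of an affine homomorphism Z^m -> Z^n, i.e. v |-> c + M v with integer c, M.\<close>
definition cube_morphism :: "nat \<Rightarrow> nat \<Rightarrow> ((nat \<Rightarrow> nat) \<Rightarrow> (nat \<Rightarrow> nat)) \<Rightarrow> bool" where
  "cube_morphism m n \<psi> \<longleftrightarrow>
     (\<forall>v\<in>cube m. \<psi> v \<in> cube n) \<and>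
     (\<exists>(c::nat \<Rightarrow> int) (M::nat \<Rightarrow> nat \<Rightarrow> int).
        \<forall>v\<in>cube m. \<forall>i<n. int (\<psi> v i) = c i + (\<Sum>j<m. M i j * int (v j)))"

text \<open>C^n(D_k(A)): maps f : {0,1}^n -> A (only values on cube n matter) whose
  alternating sum over every (k+1)-dimensional cube morphism image vanishes.\<close>
definition D_cube :: "nat \<Rightarrow> nat \<Rightarrow> ((nat \<Rightarrow> nat) \<Rightarrow> 'a::ab_group_add) \<Rightarrow> bool" where
  "D_cube k n f \<longleftrightarrow>
     (\<forall>\<psi>. cube_morphism (Suc k) n \<psi> \<longrightarrow>
        (\<Sum>v\<in>cube (Suc k). (if even (\<Sum>l<Suc k. v l) then f (\<psi> v) else - f (\<psi> v))) = 0)"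

definition D_morphism :: "nat \<Rightarrow> nat \<Rightarrow> ('a::ab_group_add \<Rightarrow> 'b::ab_group_add) \<Rightarrow> bool" where
  "D_morphism i j g \<longleftrightarrow> (\<forall>n f. D_cube i n (f :: (nat \<Rightarrow> nat) \<Rightarrow> 'a) \<longrightarrow> D_cube j n (g \<circ> f))"

end

theory Submission
  imports Defs "HOL-Library.Indicator_Function"
begin

text \<open>An affine map taking values in {0,1} on a cube has at most one nonzero linear coefficient, so
  each output coordinate of a cube morphism depends on at most one input coordinate. Hence every
  function on {0,1}^N depending on at most k coordinates is a cube of D_k, and so are sums of them.

  For i > j, the function on {0,1}^(j+1) that is x at the origin and 0 elsewhere depends on
  j + 1 \<le> i coordinates; its image under \<phi> is a cube of D_j, whose alternating sum over
  {0,1}^(j+1) is \<phi> x - \<phi> 0.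

  For i \<le> j, cubes f of D_1(A) are affine: f w = f 0 + \<Sum>_{w t = 1} (f e_t - f 0). Given a cube
  morphism \<psi> from {0,1}^m, m = j - i + 2, add i - 1 padding coordinates and let F w = f (\<psi> w)
  if all of them equal 1, and F w = 0 otherwise. Expanding f affinely writes F as a sum of functions
  of at most i coordinates, so F is a cube of D_i in dimension j + 1 and \<phi> \<circ> F is a cube of D_j.
  The alternating sum of \<phi> \<circ> F over {0,1}^(j+1) is, up to sign, that of \<phi> \<circ> f \<circ> \<psi>
  over {0,1}^m, which therefore vanishes.\<close>

definition alt_sum :: "nat \<Rightarrow> ((nat \<Rightarrow> nat) \<Rightarrow> 'a::ab_group_add) \<Rightarrow> 'a" where
  "alt_sum m g = (\<Sum>v\<in>cube m. if even (\<Sum>l<m. v l) then g v else - g v)"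

definition truncate_vertex :: "nat \<Rightarrow> (nat \<Rightarrow> nat) \<Rightarrow> nat \<Rightarrow> nat" where
  "truncate_vertex m w = (\<lambda>l. if l < m then w l else 0)"

abbreviation origin :: "nat \<Rightarrow> nat" where
  "origin \<equiv> (\<lambda>_. 0)"

lemma cube_eq_indicator: "v \<in> cube m \<Longrightarrow> v = indicator {l. l < m \<and> v l = 1}"
  unfolding cube_def indicator_def by (rule ext) (auto, metis not_le)

lemma indicator_in_cube: "U \<subseteq> {..<m} \<Longrightarrow> indicator U \<in> cube m"
  by (auto simp: cube_def indicator_def)

lemma finite_cube: "finite (cube m)"
proof (rule finite_subset)
  show "cube m \<subseteq> indicator ` Pow {..<m}"
    using cube_eq_indicator by blast
qed simp

lemma origin_in_cube: "origin \<in> cube m"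
  by (simp add: cube_def)

lemma cube_0: "cube 0 = {origin}"
  by (auto simp: cube_def)

lemma fun_upd_in_cube: "v \<in> cube m \<Longrightarrow> s < m \<Longrightarrow> x \<in> {0, 1} \<Longrightarrow> v(s := x) \<in> cube m"
  by (auto simp: cube_def)

lemma cube_eq_last_zero: "cube n = {v \<in> cube (Suc n). v n = 0}"
proof -
  have "(\<forall>i\<ge>n. v i = 0) \<longleftrightarrow> (\<forall>i\<ge>Suc n. v i = 0) \<and> v n = 0" for v :: "nat \<Rightarrow> nat"
    by (metis Suc_le_eq le_eq_less_or_eq)
  then show ?thesis
    unfolding cube_def All_less_Suc by auto
qed

lemma truncate_vertex_in_cube: "w \<in> cube N \<Longrightarrow> truncate_vertex m w \<in> cube m"
  unfolding cube_def truncate_vertex_def by (auto, metis not_le)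

lemma cube_eqI:
  assumes "w \<in> cube N" "w' \<in> cube N" "\<And>t. t < N \<Longrightarrow> w t = w' t"
  shows "w = w'"
proof
  show "w t = w' t" for t
    using assms by (cases "t < N") (auto simp: cube_def)
qed

lemma truncate_vertex_cube: "v \<in> cube m \<Longrightarrow> truncate_vertex m v = v"
  by (rule cube_eqI[OF truncate_vertex_in_cube]) (auto simp: truncate_vertex_def)

lemma truncate_vertex_fun_upd: "m \<le> p \<Longrightarrow> truncate_vertex m (w(p := x)) = truncate_vertex m w"
  by (auto simp: truncate_vertex_def fun_eq_iff)

lemma indicator_empty_nat: "(indicator {} :: nat \<Rightarrow> nat) = origin"
  by (simp add: fun_eq_iff)

lemma indicator_insert_nat: "(indicator (insert x U) :: nat \<Rightarrow> nat) = (indicator U)(x := 1)"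
  by (auto simp: indicator_def)

lemma cube_morphism_id: "cube_morphism m m (\<lambda>v. v)"
proof -
  have "(\<Sum>j<m. of_bool (i = j) * int (v j)) = int (v i)" if "i < m" for v :: "nat \<Rightarrow> nat" and i
  proof -
    have "(\<Sum>j<m. of_bool (i = j) * int (v j)) = (\<Sum>j<m. if i = j then int (v j) else 0)"
      by (rule sum.cong) auto
    then show ?thesis
      using that by simp
  qed
  then show ?thesis
    unfolding cube_morphism_def
    by (intro conjI ballI exI[of _ "\<lambda>_. 0"] exI[of _ "\<lambda>i j. of_bool (i = j)"]) simp_all
qed

subsection \<open>Alternating sums\<close>

lemma sum_fun_upd_one:
  fixes v :: "nat \<Rightarrow> nat"
  assumes "s < m" "v s = 0"
  shows "(\<Sum>l<m. (v(s := 1)) l) = (\<Sum>l<m. v l) + 1"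
proof -
  have s: "s \<in> {..<m}" using assms by simp
  have "(\<Sum>l\<in>{..<m}-{s}. (v(s := 1)) l) = (\<Sum>l\<in>{..<m}-{s}. v l)"
    by (rule sum.cong) auto
  then show ?thesis
    using sum.remove[OF finite_lessThan s, of v] sum.remove[OF finite_lessThan s, of "v(s := 1)"] assms
    by simp
qed

lemma alt_sum_pair_coordinate:
  assumes "s < m"
  shows "alt_sum m g = (\<Sum>v\<in>{v \<in> cube m. v s = 0}.
     if even (\<Sum>l<m. v l) then g v - g (v(s := 1)) else g (v(s := 1)) - g v)"
proof -
  let ?A = "{v \<in> cube m. v s = 0}"
  let ?u = "\<lambda>v. v(s := 1)"
  let ?F = "\<lambda>v. if even (\<Sum>l<m. v l) then g v else - g v"
  have cube_split: "cube m = ?A \<union> ?u ` ?A"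
  proof (intro set_eqI iffI)
    fix v assume v: "v \<in> cube m"
    show "v \<in> ?A \<union> ?u ` ?A"
    proof (cases "v s = 0")
      case False
      then have "v s = 1"
        using v assms by (auto simp: cube_def)
      then have "v = ?u (v(s := 0))"
        by auto
      moreover have "v(s := 0) \<in> ?A"
        using fun_upd_in_cube[OF v assms, of 0] by simp
      ultimately show ?thesis by blast
    qed (use v in simp)
  qed (use fun_upd_in_cube assms in auto)
  have inj: "inj_on ?u ?A"
  proof (rule inj_onI)
    fix x y assume "x \<in> ?A" "y \<in> ?A" "?u x = ?u y"
    then have "(?u x)(s := 0) = (?u y)(s := 0)" "x s = 0" "y s = 0"
      by auto
    then show "x = y"
      by (metis fun_upd_idem fun_upd_upd)
  qed
  have "alt_sum m g = sum ?F (?A \<union> ?u ` ?A)"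
    unfolding alt_sum_def by (rule arg_cong[OF cube_split])
  also have "\<dots> = sum ?F ?A + sum ?F (?u ` ?A)"
    by (rule sum.union_disjoint) (auto simp: finite_cube)
  also have "sum ?F (?u ` ?A) = (\<Sum>v\<in>?A. if even (\<Sum>l<m. v l) then - g (?u v) else g (?u v))"
    unfolding sum.reindex[OF inj]
  proof (rule sum.cong)
    fix v assume "v \<in> ?A"
    then have "(\<Sum>l<m. (?u v) l) = (\<Sum>l<m. v l) + 1"
      using sum_fun_upd_one assms by blast
    then show "(?F \<circ> ?u) v = (if even (\<Sum>l<m. v l) then - g (?u v) else g (?u v))"
      by simp
  qed simp
  finally have "alt_sum m g = sum ?F ?A +
      (\<Sum>v\<in>?A. if even (\<Sum>l<m. v l) then - g (?u v) else g (?u v))" .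
  also have "\<dots> = (\<Sum>v\<in>?A. if even (\<Sum>l<m. v l) then g v - g (?u v) else g (?u v) - g v)"
    by (subst sum.distrib[symmetric]) (rule sum.cong; simp)
  finally show ?thesis .
qed

lemma alt_sum_eq_0_if_ignores_coordinate:
  assumes "s < m" "\<And>v. v \<in> cube m \<Longrightarrow> g (v(s := 0)) = g (v(s := 1))"
  shows "alt_sum m g = 0"
proof -
  have "g v = g (v(s := 1))" if "v \<in> cube m" "v s = 0" for v
    using assms(2)[OF that(1)] that(2) by (simp add: fun_upd_idem)
  then show ?thesis
    unfolding alt_sum_pair_coordinate[OF assms(1)] by (intro sum.neutral) auto
qed

lemma alt_sum_const: "0 < m \<Longrightarrow> alt_sum m (\<lambda>_. c) = 0"
  by (rule alt_sum_eq_0_if_ignores_coordinate[of 0]) auto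

lemma alt_sum_cong: "(\<And>v. v \<in> cube m \<Longrightarrow> g v = h v) \<Longrightarrow> alt_sum m g = alt_sum m h"
  unfolding alt_sum_def by (rule sum.cong) auto

lemma alt_sum_add: "alt_sum m (\<lambda>v. g v + h v) = alt_sum m g + alt_sum m h"
  unfolding alt_sum_def by (simp add: sum.distrib[symmetric] if_distrib cong: if_cong)

lemma alt_sum_sum: "finite I \<Longrightarrow> alt_sum m (\<lambda>v. \<Sum>i\<in>I. g i v) = (\<Sum>i\<in>I. alt_sum m (g i))"
proof (induction I rule: finite_induct)
  case empty
  show ?case
    unfolding alt_sum_def by (simp cong: if_cong)
qed (simp add: alt_sum_add)

lemma alt_sum_0: "alt_sum 0 g = g origin"
  unfolding alt_sum_def cube_0 by simp

lemma alt_sum_Suc: "alt_sum (Suc n) g = alt_sum n g - alt_sum n (\<lambda>v. g (v(n := 1)))"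
proof -
  have "alt_sum (Suc n) g = (\<Sum>v\<in>cube n.
      if even (\<Sum>l<n. v l) then g v - g (v(n := 1)) else g (v(n := 1)) - g v)"
    unfolding alt_sum_pair_coordinate[OF lessI] cube_eq_last_zero[of n, symmetric]
    by (rule sum.cong) (auto simp: cube_def)
  then show ?thesis
    unfolding alt_sum_def by (simp add: sum_subtractf[symmetric] if_distrib cong: if_cong)
qed

lemma alt_sum_origin_indicator:
  assumes "0 < m"
  shows "alt_sum m (\<lambda>v. if v = origin then p else q) = p - q"
proof -
  have "alt_sum m (\<lambda>v. if v = origin then p else q) = alt_sum m (\<lambda>v. q) + alt_sum m (\<lambda>v. if v = origin then p - q else 0)"
    by (subst alt_sum_add[symmetric]) (rule alt_sum_cong, simp)
  also have "alt_sum m (\<lambda>v. if v = origin then p - q else 0) = p - q"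
    unfolding alt_sum_def using finite_cube origin_in_cube
    by (simp add: if_distrib cong: if_cong)
  finally show ?thesis
    using alt_sum_const[OF assms] by simp
qed

lemma alt_sum_pad:
  assumes "0 < m" and H: "\<And>w p. m \<le> p \<Longrightarrow> H (w(p := 1)) = H w"
  shows "alt_sum (m + r) (\<lambda>w. if \<forall>k<r. w (m + k) = 1 then H w else c) =
    (if even r then alt_sum m H else - alt_sum m H)"
proof (induction r)
  case (Suc r)
  have "alt_sum (m + r) (\<lambda>w. if \<forall>k<Suc r. w (m + k) = 1 then H w else c) = alt_sum (m + r) (\<lambda>_. c)"
    by (rule alt_sum_cong) (auto simp: cube_def)
  moreover have "alt_sum (m + r) (\<lambda>w. if \<forall>k<Suc r. (w(m + r := 1)) (m + k) = 1 then H (w(m + r := 1)) else c) =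
     alt_sum (m + r) (\<lambda>w. if \<forall>k<r. w (m + k) = 1 then H w else c)"
  proof (rule alt_sum_cong)
    fix w :: "nat \<Rightarrow> nat"
    have "(\<forall>k<Suc r. (w(m + r := 1)) (m + k) = 1) \<longleftrightarrow> (\<forall>k<r. w (m + k) = 1)"
      by (simp add: All_less_Suc)
    moreover have "H (w(m + r := 1)) = H w"
      by (rule H) simp
    ultimately show "(if \<forall>k<Suc r. (w(m + r := 1)) (m + k) = 1 then H (w(m + r := 1)) else c) =
        (if \<forall>k<r. w (m + k) = 1 then H w else c)"
      by (simp only:)
  qed
  ultimately show ?case
    using Suc.IH alt_sum_const[of "m + r" c] assms(1) by (simp add: alt_sum_Suc)
qed simp

lemma D_cube_iff_alt_sum:
  "D_cube k n f \<longleftrightarrow> (\<forall>\<psi>. cube_morphism (Suc k) n \<psi> \<longrightarrow> alt_sum (Suc k) (\<lambda>v. f (\<psi> v)) = 0)"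
  by (simp add: D_cube_def alt_sum_def)

lemma D_cube_cong:
  assumes "\<And>w. w \<in> cube n \<Longrightarrow> f w = g w"
  shows "D_cube k n f \<longleftrightarrow> D_cube k n g"
proof -
  have "alt_sum (Suc k) (\<lambda>v. f (\<psi> v)) = alt_sum (Suc k) (\<lambda>v. g (\<psi> v))"
    if "cube_morphism (Suc k) n \<psi>" for \<psi>
    using that assms by (intro alt_sum_cong) (simp add: cube_morphism_def)
  then show ?thesis
    unfolding D_cube_iff_alt_sum by auto
qed

lemma D_cube_add: "D_cube k n f \<Longrightarrow> D_cube k n g \<Longrightarrow> D_cube k n (\<lambda>w. f w + g w)"
  by (simp add: D_cube_iff_alt_sum alt_sum_add)

lemma D_cube_sum: "finite I \<Longrightarrow> (\<And>i. i \<in> I \<Longrightarrow> D_cube k n (f i)) \<Longrightarrow> D_cube k n (\<lambda>w. \<Sum>i\<in>I. f i w)"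
  by (simp add: D_cube_iff_alt_sum alt_sum_sum)

lemma alt_sum_eq_0_if_D_cube: "D_cube k (Suc k) g \<Longrightarrow> alt_sum (Suc k) g = 0"
  using cube_morphism_id unfolding D_cube_iff_alt_sum by blast

subsection \<open>Coordinates of cube morphisms\<close>

lemma boolean_affine_form_single_variable:
  fixes c :: int and M :: "nat \<Rightarrow> int"
  assumes "\<And>v. v \<in> cube m \<Longrightarrow> c + (\<Sum>j<m. M j * int (v j)) \<in> {0, 1}"
  shows "\<exists>a. \<forall>b<m. b \<noteq> a \<longrightarrow> M b = 0"
proof (cases "\<forall>b<m. M b = 0")
  case False
  then obtain a where a: "a < m" "M a \<noteq> 0"
    by auto
  have subset_sum: "c + (\<Sum>j\<in>U. M j) \<in> {0, 1}" if "U \<subseteq> {..<m}" for U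
  proof -
    have "(\<Sum>j<m. M j * int (indicator U j)) = (\<Sum>j<m. if j \<in> U then M j else 0)"
      by (rule sum.cong) (auto simp: indicator_def)
    also have "\<dots> = (\<Sum>j\<in>U. M j)"
      using that by (simp add: sum.inter_restrict[symmetric] Int_absorb1)
    finally show ?thesis
      using assms[OF indicator_in_cube[OF that]] by simp
  qed
  txt \<open>c, c + M a, c + M b and c + M a + M b cannot all lie in {0,1} when M a and M b are nonzero.\<close>
  have "M b = 0" if "b < m" "b \<noteq> a" for b
    using subset_sum[of "{}"] subset_sum[of "{a}"] subset_sum[of "{b}"] subset_sum[of "{a, b}"] a that
    by auto
  then show ?thesis
    by blast
qed blast

lemma cube_morphism_coordinate_depends_on_one:
  assumes "cube_morphism m n \<psi>" and "t < n"
  shows "\<exists>a. \<forall>v\<in>cube m. \<forall>v'\<in>cube m. v a = v' a \<longrightarrow> \<psi> v t = \<psi> v' t"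
proof -
  obtain c M where img: "\<And>v. v \<in> cube m \<Longrightarrow> \<psi> v \<in> cube n"
    and aff: "\<And>v i. v \<in> cube m \<Longrightarrow> i < n \<Longrightarrow> int (\<psi> v i) = c i + (\<Sum>j<m. M i j * int (v j))"
    using assms(1) unfolding cube_morphism_def by blast
  have "c t + (\<Sum>j<m. M t j * int (v j)) \<in> {0, 1}" if "v \<in> cube m" for v
    using img[OF that] aff[OF that assms(2)] assms(2) by (auto simp: cube_def)
  then obtain a where a: "\<And>b. b < m \<Longrightarrow> b \<noteq> a \<Longrightarrow> M t b = 0"
    using boolean_affine_form_single_variable by blast
  have "\<psi> v t = \<psi> v' t" if "v \<in> cube m" "v' \<in> cube m" "v a = v' a" for v v'
  proof -
    have "M t j * int (v j) = M t j * int (v' j)" if "j < m" for j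
      using a[OF that] \<open>v a = v' a\<close> by (cases "j = a") auto
    then have "(\<Sum>j<m. M t j * int (v j)) = (\<Sum>j<m. M t j * int (v' j))"
      by (intro sum.cong) auto
    then show ?thesis
      using aff[OF that(1) assms(2)] aff[OF that(2) assms(2)] by simp
  qed
  then show ?thesis
    by blast
qed

lemma D_cube_if_depends_on_few_coordinates:
  assumes "finite T" "card T \<le> k"
    and depends: "\<And>w w'. w \<in> cube n \<Longrightarrow> w' \<in> cube n \<Longrightarrow> (\<forall>t\<in>T. w t = w' t) \<Longrightarrow> h w = h w'"
  shows "D_cube k n h"
  unfolding D_cube_iff_alt_sum
proof (intro allI impI)
  fix \<chi> assume \<chi>: "cube_morphism (Suc k) n \<chi>"
  have img: "\<And>v. v \<in> cube (Suc k) \<Longrightarrow> \<chi> v \<in> cube n"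
    using \<chi> unfolding cube_morphism_def by blast
  have "\<forall>t\<in>T \<inter> {..<n}. \<exists>a. \<forall>v\<in>cube (Suc k). \<forall>v'\<in>cube (Suc k). v a = v' a \<longrightarrow> \<chi> v t = \<chi> v' t"
    using cube_morphism_coordinate_depends_on_one[OF \<chi>] by blast
  then obtain a where a: "\<forall>t\<in>T \<inter> {..<n}. \<forall>v\<in>cube (Suc k). \<forall>v'\<in>cube (Suc k).
      v (a t) = v' (a t) \<longrightarrow> \<chi> v t = \<chi> v' t"
    by (rule bchoice[THEN exE]) blast
  txt \<open>Some input coordinate s is read by no output coordinate in T, so h \<circ> \<chi> ignores it.\<close>
  obtain s where s: "s < Suc k" "s \<notin> a ` (T \<inter> {..<n})"
  proof (rule ccontr)
    assume "\<not> thesis"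
    with that have "{..<Suc k} \<subseteq> a ` (T \<inter> {..<n})"
      by auto
    then have "card {..<Suc k} \<le> card (a ` (T \<inter> {..<n}))"
      by (rule card_mono[rotated]) (use assms(1) in simp)
    also have "\<dots> \<le> card (T \<inter> {..<n})"
      by (rule card_image_le) (use assms(1) in simp)
    also have "\<dots> \<le> card T"
      by (rule card_mono) (use assms(1) in auto)
    finally show False
      using assms(2) by simp
  qed
  show "alt_sum (Suc k) (\<lambda>v. h (\<chi> v)) = 0"
  proof (rule alt_sum_eq_0_if_ignores_coordinate[OF s(1)])
    fix v assume v: "v \<in> cube (Suc k)"
    have v01: "v(s := 0) \<in> cube (Suc k)" "v(s := 1) \<in> cube (Suc k)"
      using fun_upd_in_cube[OF v s(1)] by auto
    have "\<chi> (v(s := 0)) t = \<chi> (v(s := 1)) t" if "t \<in> T" for t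
    proof (cases "t < n")
      case True
      then have "a t \<noteq> s"
        using s(2) that by auto
      then have "(v(s := 0)) (a t) = (v(s := 1)) (a t)"
        by simp
      then show ?thesis
        using a True that v01 by blast
    qed (use img[OF v01(1)] img[OF v01(2)] in \<open>auto simp: cube_def\<close>)
    then show "h (\<chi> (v(s := 0))) = h (\<chi> (v(s := 1)))"
      using depends[OF img[OF v01(1)] img[OF v01(2)]] by blast
  qed
qed

subsection \<open>Cubes of D_1 are affine\<close>

lemma alt_sum_2:
  "alt_sum (Suc 1) g = g origin - g (origin(0 := 1)) - (g (origin(1 := 1)) - g (origin(0 := 1, 1 := 1)))"
  unfolding One_nat_def alt_sum_Suc alt_sum_0 by simp

lemma D_cube_1_square:
  assumes D: "D_cube 1 n f" and v: "v \<in> cube n"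
    and ab: "a < n" "b < n" "a \<noteq> b" and v0: "v a = 0" "v b = 0"
  shows "f (v(a := 1, b := 1)) + f v = f (v(a := 1)) + f (v(b := 1))"
proof -
  define \<chi> where "\<chi> u = v(a := u 0, b := u 1)" for u :: "nat \<Rightarrow> nat"
  have "cube_morphism (Suc 1) n \<chi>"
    unfolding cube_morphism_def
  proof
    show "\<forall>u\<in>cube (Suc 1). \<chi> u \<in> cube n"
      using v ab unfolding \<chi>_def cube_def by auto
    have "int (\<chi> u t) = (if t = a \<or> t = b then 0 else int (v t)) +
        (\<Sum>j<Suc 1. (if j = 0 then of_bool (t = a) else of_bool (t = b)) * int (u j))" for u t
      using ab(3) unfolding \<chi>_def by auto
    then show "\<exists>c M. \<forall>u\<in>cube (Suc 1). \<forall>i<n. int (\<chi> u i) = c i + (\<Sum>j<Suc 1. M i j * int (u j))"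
      by (intro exI[of _ "\<lambda>t. if t = a \<or> t = b then 0 else int (v t)"]
          exI[of _ "\<lambda>t j. if j = 0 then of_bool (t = a) else of_bool (t = b)"]) simp
  qed
  then have "alt_sum (Suc 1) (\<lambda>u. f (\<chi> u)) = 0"
    using D unfolding D_cube_iff_alt_sum by blast
  moreover have "\<chi> origin = v" "\<chi> (origin(0 := 1)) = v(a := 1)" "\<chi> (origin(1 := 1)) = v(b := 1)"
    "\<chi> (origin(0 := 1, 1 := 1)) = v(a := 1, b := 1)"
    unfolding \<chi>_def using v0 ab(3) by (auto simp: fun_eq_iff)
  ultimately show ?thesis
    unfolding alt_sum_2 by (simp add: algebra_simps)
qed

lemma D_cube_1_increment:
  assumes D: "D_cube 1 n f" and "U \<subseteq> {..<n}" "x < n" "x \<notin> U"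
  shows "f (indicator (insert x U)) - f (indicator U) = f (indicator {x}) - f origin"
proof -
  have "finite U"
    using assms(2) finite_subset by blast
  then show ?thesis
    using assms(2-4)
  proof (induction U rule: finite_induct)
    case (insert y U)
    have "x \<noteq> y" "y < n" "U \<subseteq> {..<n}" "x \<notin> U"
      using insert.prems by auto
    have "f ((indicator U)(x := 1, y := 1)) + f (indicator U) =
        f ((indicator U)(x := 1)) + f ((indicator U)(y := 1))"
      using D_cube_1_square[OF D indicator_in_cube[OF \<open>U \<subseteq> {..<n}\<close>]] insert.hyps
        \<open>x \<noteq> y\<close> \<open>y < n\<close> \<open>x < n\<close> \<open>x \<notin> U\<close> by (simp add: indicator_def)
    then have "f (indicator (insert x (insert y U))) + f (indicator U) =
        f (indicator (insert x U)) + f (indicator (insert y U))"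
      using \<open>x \<noteq> y\<close> by (simp add: indicator_insert_nat fun_upd_twist)
    then have "f (indicator (insert x (insert y U))) - f (indicator (insert y U)) =
        f (indicator (insert x U)) - f (indicator U)"
      by (simp add: algebra_simps)
    then show ?case
      using insert.IH \<open>U \<subseteq> {..<n}\<close> \<open>x \<notin> U\<close> \<open>x < n\<close> by simp
  qed (simp add: indicator_empty_nat)
qed

lemma D_cube_1_indicator:
  assumes D: "D_cube 1 n f" and "U \<subseteq> {..<n}"
  shows "f (indicator U) = f origin + (\<Sum>t\<in>U. f (indicator {t}) - f origin)"
proof -
  have "finite U"
    using assms(2) finite_subset by blast
  then show ?thesis
    using assms(2)
  proof (induction U rule: finite_induct)
    case (insert x U)
    have "f (indicator (insert x U)) = f (indicator U) + (f (indicator {x}) - f origin)"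
      using D_cube_1_increment[OF D, of U x] insert.hyps insert.prems
      by (metis add.commute diff_add_cancel insert_subset lessThan_iff)
    also have "\<dots> = f origin + (\<Sum>t\<in>insert x U. f (indicator {t}) - f origin)"
      using insert by (simp add: algebra_simps)
    finally show ?case .
  qed (simp add: indicator_empty_nat)
qed

lemma D_cube_1_affine:
  assumes D: "D_cube 1 n f" and w: "w \<in> cube n"
  shows "f w = f origin + (\<Sum>t<n. if w t = 1 then f (indicator {t}) - f origin else 0)"
proof -
  have "f w = f origin + (\<Sum>t\<in>{t \<in> {..<n}. w t = 1}. f (indicator {t}) - f origin)"
    using D_cube_1_indicator[OF D, of "{t \<in> {..<n}. w t = 1}"] cube_eq_indicator[OF w] by auto
  also have "(\<Sum>t\<in>{t \<in> {..<n}. w t = 1}. f (indicator {t}) - f origin) =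
      (\<Sum>t<n. if w t = 1 then f (indicator {t}) - f origin else 0)"
    by (rule sum.inter_filter) simp
  finally show ?thesis .
qed

lemma D_morphism_constant_if_gt:
  fixes \<phi> :: "'a::ab_group_add \<Rightarrow> 'b::ab_group_add"
  assumes "D_morphism i j \<phi>" and "j < i"
  shows "\<phi> x = \<phi> 0"
proof -
  define F :: "(nat \<Rightarrow> nat) \<Rightarrow> 'a" where "F v = (if v = origin then x else 0)" for v
  have "D_cube i (Suc j) F"
  proof (rule D_cube_if_depends_on_few_coordinates[of "{..<Suc j}"])
    fix w w' assume "w \<in> cube (Suc j)" "w' \<in> cube (Suc j)" "\<forall>t\<in>{..<Suc j}. w t = w' t"
    then have "w = w'"
      by (intro cube_eqI) auto
    then show "F w = F w'"
      by simp
  qed (use assms(2) in auto)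
  then have "alt_sum (Suc j) (\<phi> \<circ> F) = 0"
    using assms(1) alt_sum_eq_0_if_D_cube unfolding D_morphism_def by blast
  moreover have "alt_sum (Suc j) (\<phi> \<circ> F) = \<phi> x - \<phi> 0"
    unfolding comp_def F_def if_distrib[of \<phi>] by (rule alt_sum_origin_indicator) simp
  ultimately show ?thesis
    by simp
qed

lemma D_cube_padded_face:
  fixes f :: "(nat \<Rightarrow> nat) \<Rightarrow> 'a::ab_group_add"
  assumes D: "D_cube 1 n f" and \<psi>: "cube_morphism m n \<psi>"
  shows "D_cube (Suc r) (m + r) (\<lambda>w. if \<forall>k<r. w (m + k) = 1 then f (\<psi> (truncate_vertex m w)) else 0)"
proof -
  define padded :: "(nat \<Rightarrow> nat) \<Rightarrow> bool" where "padded w \<longleftrightarrow> (\<forall>k<r. w (m + k) = 1)" for w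
  define d where "d t = f (indicator {t}) - f origin" for t
  have padded_cong: "padded w = padded w'" if "\<forall>t\<in>{m..<m + r}. w t = w' t" for w w'
    using that unfolding padded_def by auto
  have decomposition_cube: "D_cube (Suc r) (m + r) (\<lambda>w. (if padded w then f origin else 0) +
      (\<Sum>t<n. if padded w \<and> \<psi> (truncate_vertex m w) t = 1 then d t else 0))"
  proof (intro D_cube_add D_cube_sum)
    show "D_cube (Suc r) (m + r) (\<lambda>w. if padded w then f origin else 0)"
      by (rule D_cube_if_depends_on_few_coordinates[of "{m..<m + r}"]) (use padded_cong in auto)
    fix t assume "t \<in> {..<n}"
    then obtain a where a: "\<forall>v\<in>cube m. \<forall>v'\<in>cube m. v a = v' a \<longrightarrow> \<psi> v t = \<psi> v' t"
      using cube_morphism_coordinate_depends_on_one[OF \<psi>] by blast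
    show "D_cube (Suc r) (m + r) (\<lambda>w. if padded w \<and> \<psi> (truncate_vertex m w) t = 1 then d t else 0)"
    proof (rule D_cube_if_depends_on_few_coordinates[of "insert a {m..<m + r}"])
      fix w w' assume w: "w \<in> cube (m + r)" "w' \<in> cube (m + r)" "\<forall>t\<in>insert a {m..<m + r}. w t = w' t"
      then have "truncate_vertex m w a = truncate_vertex m w' a"
        by (simp add: truncate_vertex_def)
      then have "\<psi> (truncate_vertex m w) t = \<psi> (truncate_vertex m w') t"
        using a truncate_vertex_in_cube[OF w(1)] truncate_vertex_in_cube[OF w(2)] by blast
      moreover have "padded w = padded w'"
        using padded_cong w(3) by blast
      ultimately show "(if padded w \<and> \<psi> (truncate_vertex m w) t = 1 then d t else 0) =
          (if padded w' \<and> \<psi> (truncate_vertex m w') t = 1 then d t else 0)"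
        by simp
    qed (simp_all add: card_insert_if)
  qed simp
  have decomposition: "(if padded w then f (\<psi> (truncate_vertex m w)) else 0) =
      (if padded w then f origin else 0) +
      (\<Sum>t<n. if padded w \<and> \<psi> (truncate_vertex m w) t = 1 then d t else 0)"
    if "w \<in> cube (m + r)" for w
  proof -
    have "\<psi> (truncate_vertex m w) \<in> cube n"
      using \<psi> truncate_vertex_in_cube[OF that] unfolding cube_morphism_def by blast
    then show ?thesis
      using D_cube_1_affine[OF D] unfolding d_def by simp
  qed
  show ?thesis
    unfolding padded_def[symmetric]
    by (rule D_cube_cong[THEN iffD2]) (fact decomposition, fact decomposition_cube)
qed

lemma D_morphism_1_shift:
  fixes \<phi> :: "'a::ab_group_add \<Rightarrow> 'b::ab_group_add"
  assumes "D_morphism i j \<phi>" and "1 \<le> i" "i \<le> j"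
  shows "D_morphism 1 (j - i + 1) \<phi>"
  unfolding D_morphism_def
proof (intro allI impI)
  fix n and f :: "(nat \<Rightarrow> nat) \<Rightarrow> 'a"
  assume D: "D_cube 1 n f"
  define m where "m = Suc (j - i + 1)"
  define r where "r = i - 1"
  have "m + r = Suc j" "Suc r = i" "0 < m"
    using assms(2,3) by (simp_all add: m_def r_def)
  show "D_cube (j - i + 1) n (\<phi> \<circ> f)"
    unfolding D_cube_iff_alt_sum
  proof (intro allI impI)
    fix \<psi> assume "cube_morphism (Suc (j - i + 1)) n \<psi>"
    then have \<psi>: "cube_morphism m n \<psi>"
      by (simp add: m_def)
    define H where "H w = \<phi> (f (\<psi> (truncate_vertex m w)))" for w
    have "D_cube j (Suc j) (\<phi> \<circ> (\<lambda>w. if \<forall>k<r. w (m + k) = 1 then f (\<psi> (truncate_vertex m w)) else 0))"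
      using assms(1) D_cube_padded_face[OF D \<psi>, of r]
      unfolding D_morphism_def \<open>Suc r = i\<close> \<open>m + r = Suc j\<close> by blast
    moreover have "\<phi> \<circ> (\<lambda>w. if \<forall>k<r. w (m + k) = 1 then f (\<psi> (truncate_vertex m w)) else 0) =
        (\<lambda>w. if \<forall>k<r. w (m + k) = 1 then H w else \<phi> 0)"
      by (auto simp: fun_eq_iff H_def)
    ultimately have "alt_sum (m + r) (\<lambda>w. if \<forall>k<r. w (m + k) = 1 then H w else \<phi> 0) = 0"
      using alt_sum_eq_0_if_D_cube \<open>m + r = Suc j\<close> by simp
    moreover have "H (w(p := 1)) = H w" if "m \<le> p" for w p
      using that by (simp add: H_def truncate_vertex_fun_upd)
    ultimately have "alt_sum m H = 0"
      using alt_sum_pad[OF \<open>0 < m\<close>, of H r "\<phi> 0"] by (simp split: if_split_asm)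
    moreover have "alt_sum m H = alt_sum m (\<lambda>v. (\<phi> \<circ> f) (\<psi> v))"
      by (rule alt_sum_cong) (simp add: H_def truncate_vertex_cube)
    ultimately show "alt_sum (Suc (j - i + 1)) (\<lambda>v. (\<phi> \<circ> f) (\<psi> v)) = 0"
      by (simp add: m_def)
  qed
qed

theorem mainTheorem3:
  fixes \<phi> :: "'a::ab_group_add \<Rightarrow> 'b::ab_group_add"
    and i j :: nat
  assumes "i \<ge> 1" and "j \<ge> 1"
    and "D_morphism i j \<phi>"
  shows "(i > j \<longrightarrow> (\<exists>c. \<forall>x. \<phi> x = c)) \<and>
         (i \<le> j \<longrightarrow> D_morphism 1 (j - i + 1) \<phi>)"
  using D_morphism_constant_if_gt[OF assms(3)] D_morphism_1_shift[OF assms(3,1)] by blast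

end
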